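(* Let $\Phi$ be an N-function. For every positive integer $n$ and every integer $s$ with $0\le s<n/2$, $K_{n,s}$ is a bounded linear operator on $L_\Phi^*(\triangle)$ with $\|K_{n,s}(f)\|_\Phi\le 12\|f\|_\Phi$ for all $f\in L_\Phi^*(\triangle)$, i.e. $\|K_{n,s}\|_\Phi\le 12$.
   Context: $\triangle=\{x=(x_1,x_2)\in\mathbb R^2: x_1+x_2\le 1,\ x_1,x_2\ge 0\}$. $\Phi$ is an N-function with complementary N-function $\Psi$. The Orlicz space $L_\Phi^*(\triangle)$ consists of all Lebesgue measurable $f$ on $\triangle$ such that $\int_\triangle f g\,dx$ is finite for every measurable $g$ with $\int_\triangle\Psi(g(x))\,dx<\infty$, with the Orlicz norm $\|f\|_\Phi=\sup\{|\int_\triangle f(x)g(x)\,dx| : \int_\triangle \Psi(g(x))\,dx\le 1\}=\inf_{\alpha>0}\frac1\alpha\{1+\int_\triangle\Phi(\alpha f(x))\,dx\}$. Stancu–Kantorovič operator: for $x\in\triangle$, $n\in\mathbb Z^+$, integer $0\le s<n/2$, $K_{n,s}(f;x)=\sum_{k+l\le n} b_{n,k,l,s}(x)\,(n+2)^2\int_{I_{n,k,l}} f(u)\,du$ (sum over integers $k,l\ge 0$), where $I_{n,k,l}=\left[\frac{k}{n+2},\frac{k+1}{n+2}\right]\times\left[\frac{l}{n+2},\frac{l+1}{n+2}\right]$, $p_{m,k,l}(x)=\frac{m!}{k!\,l!\,(m-k-l)!}x_1^kx_2^l(1-x_1-x_2)^{m-k-l}$ for integers $k,l\ge0$, $k+l\le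 m$, and $p_{m,k,l}:=0$ otherwise (i.e. if $k<0$, $l<0$ or $k+l>m$), and $b_{n,k,l,s}(x)=(1-x_1-x_2)\,p_{n-s,k,l}(x)+x_1\,p_{n-s,k-s,l}(x)+x_2\,p_{n-s,k,l-s}(x)$. *)

theory Defs
  imports "HOL-Analysis.Analysis"
begin

definition triangle :: "(real \<times> real) set" where
  "triangle = {x. fst x + snd x \<le> 1 \<and> fst x \<ge> 0 \<and> snd x \<ge> 0}"

definition N_function :: "(real \<Rightarrow> real) \<Rightarrow> bool" where
  "N_function \<Phi> \<longleftrightarrow> convex_on UNIV \<Phi> \<and> (\<forall>u. \<Phi> (- u) = \<Phi> u) \<and> \<Phi> 0 = 0
     \<and> (\<forall>u. u \<noteq> 0 \<longrightarrow> \<Phi> u > 0)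
     \<and> ((\<lambda>u. \<Phi> u / u) \<longlongrightarrow> 0) (at_right 0)
     \<and> filterlim (\<lambda>u. \<Phi> u / u) at_top at_top"

definition compl_N :: "(real \<Rightarrow> real) \<Rightarrow> real \<Rightarrow> real" where
  "compl_N \<Phi> v = (SUP u\<in>{0..}. u * \<bar>v\<bar> - \<Phi> u)"

definition orlicz_space :: "(real \<Rightarrow> real) \<Rightarrow> ((real \<times> real) \<Rightarrow> real) set" where
  "orlicz_space \<Phi> = {f. f \<in> borel_measurable (lebesgue_on triangle) \<and>
     (\<forall>g \<in> borel_measurable (lebesgue_on triangle).
        (\<integral>\<^sup>+ x. ennreal (compl_N \<Phi> (g x)) \<partial>lebesgue_on triangle) < \<infinity> \<longrightarrow>
        integrable (lebesgue_on triangle) (\<lambda>x. f x * g x))}"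

definition orlicz_norm :: "(real \<Rightarrow> real) \<Rightarrow> ((real \<times> real) \<Rightarrow> real) \<Rightarrow> ereal" where
  "orlicz_norm \<Phi> f = (SUP g \<in> {g \<in> borel_measurable (lebesgue_on triangle).
        (\<integral>\<^sup>+ x. ennreal (compl_N \<Phi> (g x)) \<partial>lebesgue_on triangle) \<le> 1}.
      ereal \<bar>\<integral> x. f x * g x \<partial>lebesgue_on triangle\<bar>)"

definition sq_cell :: "nat \<Rightarrow> nat \<Rightarrow> nat \<Rightarrow> (real \<times> real) set" where
  "sq_cell n k l = {real k / real (n+2) .. real (k+1) / real (n+2)} \<times>
                   {real l / real (n+2) .. real (l+1) / real (n+2)}"

definition p_tri :: "nat \<Rightarrow> int \<Rightarrow> int \<Rightarrow> real \<times> real \<Rightarrow> real" where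
  "p_tri m k l x = (if 0 \<le> k \<and> 0 \<le> l \<and> k + l \<le> int m then
      fact m / (fact (nat k) * fact (nat l) * fact (m - nat k - nat l))
      * fst x ^ nat k * snd x ^ nat l * (1 - fst x - snd x) ^ (m - nat k - nat l)
    else 0)"

definition b_tri :: "nat \<Rightarrow> nat \<Rightarrow> nat \<Rightarrow> nat \<Rightarrow> real \<times> real \<Rightarrow> real" where
  "b_tri n k l s x = (1 - fst x - snd x) * p_tri (n - s) (int k) (int l) x
     + fst x * p_tri (n - s) (int k - int s) (int l) x
     + snd x * p_tri (n - s) (int k) (int l - int s) x"

definition stancu_kantorovich ::
    "nat \<Rightarrow> nat \<Rightarrow> ((real \<times> real) \<Rightarrow> real) \<Rightarrow> (real \<times> real) \<Rightarrow> real" where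
  "stancu_kantorovich n s f x = (\<Sum>k\<le>n. \<Sum>l\<le>n - k.
      b_tri n k l s x * (real (n+2))^2 * (LINT u : sq_cell n k l | lebesgue. f u))"

end

theory Submission
  imports Defs
begin

text \<open>The proof is by duality. Writing \<open>b\<^sub>q\<close> for the Stancu weights, \<open>I\<^sub>q f\<close> for the integral
  of \<open>f\<close> over the \<open>q\<close>-th square cell and \<open>N = (n + 2)\<^sup>2\<close> for the reciprocal cell area,
  \<open>\<integral> K f \<cdot> g = \<Sum>\<^sub>q N \<cdot> I\<^sub>q f \<cdot> \<integral> b\<^sub>q g = 12 \<integral> f \<cdot> h\<close>, where \<open>h\<close> is the step function taking the
  value \<open>c\<^sub>q = N/12 \<cdot> \<integral> b\<^sub>q g\<close> on the \<open>q\<close>-th cell. Since \<open>\<integral> b\<^sub>q \<le> 3/((m+1)(m+2))\<close> with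
  \<open>m = n - s \<ge> n/2\<close>, the weights \<open>N/12 \<cdot> b\<^sub>q\<close> have mass at most 1, so Jensen's inequality gives
  \<open>\<Psi>(c\<^sub>q) \<le> N/12 \<cdot> \<integral> b\<^sub>q \<Psi>(g)\<close>; summing over the cells of area \<open>1/N\<close> and using
  \<open>\<Sum>\<^sub>q b\<^sub>q \<le> 1\<close> shows that the modular of \<open>h\<close> is at most that of \<open>g\<close>. Hence
  \<open>|\<integral> K f \<cdot> g| = 12 |\<integral> f \<cdot> h| \<le> 12 \<parallel>f\<parallel>\<close>.\<close>

section \<open>N-functions and their complements\<close>

lemma N_function_nonneg: "N_function \<Phi> \<Longrightarrow> \<Phi> u \<ge> 0"
  unfolding N_function_def by (cases "u = 0") (auto intro: less_imp_le)

lemma N_function_bdd_above_Young: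
  assumes "N_function \<Phi>"
  shows "bdd_above ((\<lambda>u. u * \<bar>v\<bar> - \<Phi> u) ` {0..})"
proof -
  have "filterlim (\<lambda>u. \<Phi> u / u) at_top at_top" using assms unfolding N_function_def by auto
  hence "eventually (\<lambda>u. \<Phi> u / u \<ge> \<bar>v\<bar>) at_top" by (simp add: filterlim_at_top)
  then obtain U where U: "\<And>u. u \<ge> U \<Longrightarrow> \<Phi> u / u \<ge> \<bar>v\<bar>" by (auto simp: eventually_at_top_linorder)
  show ?thesis unfolding bdd_above_def
  proof (intro exI ballI)
    fix y assume "y \<in> (\<lambda>u. u * \<bar>v\<bar> - \<Phi> u) ` {0..}"
    then obtain u where u: "u \<ge> 0" "y = u * \<bar>v\<bar> - \<Phi> u" by auto
    show "y \<le> max U 1 * \<bar>v\<bar>"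
    proof (cases "u \<ge> max U 1")
      case True
      hence "\<Phi> u / u \<ge> \<bar>v\<bar>" "u > 0" using U by auto
      hence "\<Phi> u \<ge> u * \<bar>v\<bar>" by (simp add: field_simps)
      thus ?thesis using u by (auto intro: order.trans[of _ 0])
    next
      case False
      hence "u * \<bar>v\<bar> \<le> max U 1 * \<bar>v\<bar>" by (intro mult_right_mono) auto
      thus ?thesis using u N_function_nonneg[OF assms, of u] by linarith
    qed
  qed
qed

lemma Young_le_compl_N:
  assumes "N_function \<Phi>" "u \<ge> 0"
  shows "u * \<bar>v\<bar> - \<Phi> u \<le> compl_N \<Phi> v"
  unfolding compl_N_def
  by (rule cSUP_upper[OF _ N_function_bdd_above_Young[OF assms(1)]]) (use assms in auto)

lemma compl_N_le:
  assumes "\<And>u. u \<ge> 0 \<Longrightarrow> u * \<bar>v\<bar> - \<Phi> u \<le> B"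
  shows "compl_N \<Phi> v \<le> B"
  unfolding compl_N_def by (rule cSUP_least) (use assms in auto)

lemma compl_N_nonneg: "N_function \<Phi> \<Longrightarrow> compl_N \<Phi> v \<ge> 0"
  using Young_le_compl_N[of \<Phi> 0 v] by (simp add: N_function_def)

lemma compl_N_zero: "N_function \<Phi> \<Longrightarrow> compl_N \<Phi> 0 = 0"
  using compl_N_nonneg[of \<Phi> 0] compl_N_le[of 0 \<Phi> 0] N_function_nonneg[of \<Phi>] by force

lemma abs_le_compl_N: "N_function \<Phi> \<Longrightarrow> \<bar>v\<bar> \<le> compl_N \<Phi> v + \<Phi> 1"
  using Young_le_compl_N[of \<Phi> 1 v] by simp

lemma borel_measurable_compl_N:
  assumes "N_function \<Phi>"
  shows "compl_N \<Phi> \<in> borel_measurable borel"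
proof -
  define G where "G t = compl_N \<Phi> (max t 0)" for t
  have "mono G" unfolding mono_def G_def
  proof (intro allI impI)
    fix a b :: real assume "a \<le> b"
    show "compl_N \<Phi> (max a 0) \<le> compl_N \<Phi> (max b 0)"
    proof (rule compl_N_le)
      fix u :: real assume u: "u \<ge> 0"
      have "u * \<bar>max a 0\<bar> \<le> u * \<bar>max b 0\<bar>" using u \<open>a \<le> b\<close> by (intro mult_left_mono) auto
      thus "u * \<bar>max a 0\<bar> - \<Phi> u \<le> compl_N \<Phi> (max b 0)"
        using Young_le_compl_N[OF assms u, of "max b 0"] by linarith
    qed
  qed
  hence "G \<in> borel_measurable borel" by (rule borel_measurable_mono)
  moreover have "compl_N \<Phi> = (\<lambda>v. G \<bar>v\<bar>)"
    unfolding G_def compl_N_def by (auto simp: fun_eq_iff)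
  ultimately show ?thesis by simp
qed

text \<open>Jensen's inequality, proved directly from the supremum defining \<open>compl_N \<Phi>\<close>; a weight
  of mass below 1 is allowed because \<open>\<Phi> \<ge> 0\<close>.\<close>

lemma compl_N_integral_le:
  fixes w g :: "'a \<Rightarrow> real"
  assumes \<Phi>: "N_function \<Phi>"
    and w: "integrable M w" and wg: "integrable M (\<lambda>x. w x * g x)"
    and w\<Psi>g: "integrable M (\<lambda>x. w x * compl_N \<Phi> (g x))"
    and w_nonneg: "\<And>x. x \<in> space M \<Longrightarrow> w x \<ge> 0" and mass: "(\<integral>x. w x \<partial>M) \<le> 1"
  shows "compl_N \<Phi> (\<integral>x. w x * g x \<partial>M) \<le> (\<integral>x. w x * compl_N \<Phi> (g x) \<partial>M)"
proof (rule compl_N_le)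
  fix u :: real assume u: "u \<ge> 0"
  have abs_eq: "\<And>x. x \<in> space M \<Longrightarrow> \<bar>w x * g x\<bar> = w x * \<bar>g x\<bar>"
    using w_nonneg by (simp add: abs_mult)
  have w_abs_g: "integrable M (\<lambda>x. w x * \<bar>g x\<bar>)"
    using integrable_abs[OF wg] by (rule Bochner_Integration.integrable_cong[THEN iffD1, rotated 2])
      (simp_all add: abs_eq)
  have "\<bar>\<integral>x. w x * g x \<partial>M\<bar> \<le> (\<integral>x. \<bar>w x * g x\<bar> \<partial>M)" by (rule integral_abs_bound)
  also have "\<dots> = (\<integral>x. w x * \<bar>g x\<bar> \<partial>M)"
    by (intro Bochner_Integration.integral_cong) (simp_all add: abs_eq)
  finally have "u * \<bar>\<integral>x. w x * g x \<partial>M\<bar> \<le> u * (\<integral>x. w x * \<bar>g x\<bar> \<partial>M)"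
    using u by (rule mult_left_mono)
  moreover have "(\<integral>x. w x \<partial>M) * \<Phi> u \<le> \<Phi> u"
    using mult_right_mono[OF mass N_function_nonneg[OF \<Phi>, of u]] by simp
  moreover have "(\<integral>x. w x * (u * \<bar>g x\<bar> - \<Phi> u) \<partial>M)
      = u * (\<integral>x. w x * \<bar>g x\<bar> \<partial>M) - (\<integral>x. w x \<partial>M) * \<Phi> u"
  proof -
    have "(\<lambda>x. w x * (u * \<bar>g x\<bar> - \<Phi> u)) = (\<lambda>x. u * (w x * \<bar>g x\<bar>) - w x * \<Phi> u)"
      by (simp add: algebra_simps)
    thus ?thesis using w_abs_g w by simp
  qed
  moreover have "(\<integral>x. w x * (u * \<bar>g x\<bar> - \<Phi> u) \<partial>M) \<le> (\<integral>x. w x * compl_N \<Phi> (g x) \<partial>M)"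
  proof (rule integral_mono[OF _ w\<Psi>g])
    show "integrable M (\<lambda>x. w x * (u * \<bar>g x\<bar> - \<Phi> u))"
      using w_abs_g w by (simp add: right_diff_distrib mult_ac)
    fix x assume "x \<in> space M"
    thus "w x * (u * \<bar>g x\<bar> - \<Phi> u) \<le> w x * compl_N \<Phi> (g x)"
      using w_nonneg Young_le_compl_N[OF \<Phi> u, of "g x"] by (intro mult_left_mono)
  qed
  ultimately show "u * \<bar>\<integral>x. w x * g x \<partial>M\<bar> - \<Phi> u \<le> (\<integral>x. w x * compl_N \<Phi> (g x) \<partial>M)"
    by linarith
qed

lemma (in finite_measure) integrable_if_nn_integral_compl_N_finite:
  assumes \<Phi>: "N_function \<Phi>" and g: "g \<in> borel_measurable M"
    and fin: "(\<integral>\<^sup>+ x. ennreal (compl_N \<Phi> (g x)) \<partial>M) < \<infinity>"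
  shows "integrable M g"
proof (rule integrableI_bounded[OF g])
  have "(\<integral>\<^sup>+ x. ennreal (norm (g x)) \<partial>M) \<le> (\<integral>\<^sup>+ x. ennreal (compl_N \<Phi> (g x)) + ennreal (\<Phi> 1) \<partial>M)"
  proof (intro nn_integral_mono)
    fix x
    have "ennreal \<bar>g x\<bar> \<le> ennreal (compl_N \<Phi> (g x) + \<Phi> 1)"
      using abs_le_compl_N[OF \<Phi>] by (rule ennreal_leI)
    thus "ennreal (norm (g x)) \<le> ennreal (compl_N \<Phi> (g x)) + ennreal (\<Phi> 1)"
      using compl_N_nonneg[OF \<Phi>] N_function_nonneg[OF \<Phi>, of 1] by (simp add: ennreal_plus)
  qed
  also have "\<dots> = (\<integral>\<^sup>+ x. ennreal (compl_N \<Phi> (g x)) \<partial>M) + ennreal (\<Phi> 1) * emeasure M (space M)"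
    using borel_measurable_compl_N[OF \<Phi>] g by (subst nn_integral_add) (auto simp: nn_integral_const)
  also have "\<dots> < \<infinity>"
    using fin by (simp add: ennreal_mult_eq_top_iff less_top[symmetric])
  finally show "(\<integral>\<^sup>+ x. ennreal (norm (g x)) \<partial>M) < \<infinity>" .
qed

abbreviation lebesgue_triangle :: "(real \<times> real) measure" where
  "lebesgue_triangle \<equiv> lebesgue_on triangle"

lemma closed_triangle: "closed triangle"
proof -
  have "triangle = {x. fst x + snd x \<le> 1} \<inter> {x. fst x \<ge> 0} \<inter> {x. snd x \<ge> 0}"
    unfolding triangle_def by auto
  also have "closed \<dots>" by (intro closed_Int closed_Collect_le continuous_intros)
  finally show ?thesis .
qed

lemma triangle_subset_unit_square: "triangle \<subseteq> cbox (0, 0) (1, 1)"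
  by (auto simp: triangle_def cbox_Pair_eq)

lemma sets_triangle [measurable]: "triangle \<in> sets borel"
  using closed_triangle by (simp add: borel_closed)

lemma emeasure_triangle_finite: "emeasure lebesgue triangle < \<infinity>"
proof -
  have "emeasure lebesgue triangle \<le> emeasure lebesgue (cbox (0::real, 0::real) (1, 1))"
    by (intro emeasure_mono triangle_subset_unit_square) auto
  also have "\<dots> < \<infinity>" using emeasure_bounded_finite[OF bounded_cbox] by simp
  finally show ?thesis .
qed

lemma finite_measure_lebesgue_triangle: "finite_measure lebesgue_triangle"
  using emeasure_triangle_finite by (intro finite_measureI) (simp add: emeasure_restrict_space)

lemma borel_measurable_lebesgue_triangle:
  "f \<in> borel_measurable borel \<Longrightarrow> f \<in> borel_measurable lebesgue_triangle"
  by (intro measurable_restrict_space1 measurable_completion) (simp add: measurable_lborel1)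

lemma nn_integral_lebesgue_triangle:
  "f \<in> borel_measurable borel \<Longrightarrow>
    (\<integral>\<^sup>+ x. f x \<partial>lebesgue_triangle) = (\<integral>\<^sup>+ x. f x * indicator triangle x \<partial>lborel)"
  by (simp add: nn_integral_restrict_space nn_integral_completion)

lemma orlicz_space_integrable:
  assumes \<Phi>: "N_function \<Phi>" and f: "f \<in> orlicz_space \<Phi>"
  shows "integrable lebesgue_triangle f"
proof -
  have "(\<integral>\<^sup>+ x. ennreal (compl_N \<Phi> 1) \<partial>lebesgue_triangle) < \<infinity>"
    using emeasure_triangle_finite
    by (simp add: nn_integral_const emeasure_restrict_space ennreal_mult_less_top)
  hence "integrable lebesgue_triangle (\<lambda>x. f x * 1)"
    using f unfolding orlicz_space_def by fastforce
  thus ?thesis by simp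
qed

section \<open>Trinomial weights\<close>

lemma trinomial_expansion:
  "(\<Sum>i\<le>m. \<Sum>j\<le>m-i. fact m / (fact i * fact j * fact (m - i - j)) * a^i * b^j * c^(m-i-j))
    = (a + b + c :: real) ^ m"
proof -
  have "(a + (b + c)) ^ m = (\<Sum>i\<le>m. of_nat (m choose i) * a^i * (b + c)^(m-i))"
    by (simp add: binomial_ring mult.assoc)
  also have "\<dots> = (\<Sum>i\<le>m. \<Sum>j\<le>m-i. fact m / (fact i * fact j * fact (m - i - j)) * a^i * b^j * c^(m-i-j))"
  proof (rule sum.cong[OF refl])
    fix i assume i: "i \<in> {..m}"
    have "(b + c)^(m-i) = (\<Sum>j\<le>m-i. of_nat (m-i choose j) * b^j * c^(m-i-j))"
      by (simp add: binomial_ring mult.assoc)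
    hence "of_nat (m choose i) * a^i * (b + c)^(m-i)
        = (\<Sum>j\<le>m-i. of_nat (m choose i) * of_nat (m-i choose j) * a^i * b^j * c^(m-i-j))"
      by (simp add: sum_distrib_left mult_ac)
    also have "\<dots> = (\<Sum>j\<le>m-i. fact m / (fact i * fact j * fact (m - i - j)) * a^i * b^j * c^(m-i-j))"
    proof (rule sum.cong[OF refl])
      fix j assume j: "j \<in> {..m-i}"
      have "real (m choose i) * real (m-i choose j)
          = fact m / (fact i * fact (m-i)) * (fact (m-i) / (fact j * fact (m-i-j)))"
        using i j by (simp add: binomial_fact)
      also have "\<dots> = fact m / (fact i * fact j * fact (m - i - j))"
        by (simp add: field_simps)
      finally show "real (m choose i) * real (m-i choose j) * a^i * b^j * c^(m-i-j)
          = fact m / (fact i * fact j * fact (m - i - j)) * a^i * b^j * c^(m-i-j)"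
        by simp
    qed
    finally show "of_nat (m choose i) * a^i * (b + c)^(m-i)
        = (\<Sum>j\<le>m-i. fact m / (fact i * fact j * fact (m - i - j)) * a^i * b^j * c^(m-i-j))" .
  qed
  finally show ?thesis by (simp add: add.assoc)
qed

lemma p_tri_nonneg: "x \<in> triangle \<Longrightarrow> p_tri m i j x \<ge> 0"
  unfolding p_tri_def triangle_def by (auto intro!: mult_nonneg_nonneg divide_nonneg_nonneg)

lemma b_tri_nonneg: "x \<in> triangle \<Longrightarrow> b_tri n k l s x \<ge> 0"
  using p_tri_nonneg[of x] unfolding b_tri_def triangle_def
  by (auto intro!: add_nonneg_nonneg mult_nonneg_nonneg)

lemma continuous_on_p_tri: "continuous_on A (p_tri m i j)"
  unfolding p_tri_def by (cases "0 \<le> i \<and> 0 \<le> j \<and> i + j \<le> int m") (auto intro!: continuous_intros)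

lemma borel_measurable_p_tri [measurable]: "p_tri m i j \<in> borel_measurable borel"
  by (rule borel_measurable_continuous_onI[OF continuous_on_p_tri])

lemma borel_measurable_b_tri [measurable]: "b_tri n k l s \<in> borel_measurable borel"
  unfolding b_tri_def by (intro borel_measurable_continuous_onI continuous_intros continuous_on_p_tri)

definition trinomial_indices :: "nat \<Rightarrow> (int \<times> int) set" where
  "trinomial_indices m = (\<lambda>(i, j). (int i, int j)) ` (SIGMA i:{..m}. {..m-i})"

lemma sum_p_tri_trinomial_indices:
  "(\<Sum>q\<in>trinomial_indices m. p_tri m (fst q) (snd q) x) = 1"
proof -
  have "inj_on (\<lambda>(i, j). (int i, int j)) (SIGMA i:{..m}. {..m-i})" by (auto simp: inj_on_def)
  hence "(\<Sum>q\<in>trinomial_indices m. p_tri m (fst q) (snd q) x)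
      = (\<Sum>(i, j)\<in>(SIGMA i:{..m}. {..m-i}). p_tri m (int i) (int j) x)"
    unfolding trinomial_indices_def by (subst sum.reindex) (simp_all add: case_prod_unfold)
  also have "\<dots> = (\<Sum>i\<le>m. \<Sum>j\<le>m-i. fact m / (fact i * fact j * fact (m - i - j))
      * fst x^i * snd x^j * (1 - fst x - snd x)^(m-i-j))"
    by (subst sum.Sigma[symmetric]) (auto simp: p_tri_def intro!: sum.cong)
  also have "\<dots> = 1" by (subst trinomial_expansion) simp
  finally show ?thesis .
qed

lemma p_tri_eq_0_outside:
  assumes "q \<notin> trinomial_indices m"
  shows "p_tri m (fst q) (snd q) x = 0"
proof -
  have "q \<in> trinomial_indices m" if "0 \<le> fst q" "0 \<le> snd q" "fst q + snd q \<le> int m"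
  proof -
    have "q = (\<lambda>(i, j). (int i, int j)) (nat (fst q), nat (snd q))" using that by (cases q) auto
    moreover have "(nat (fst q), nat (snd q)) \<in> (SIGMA i:{..m}. {..m-i})" using that by auto
    ultimately show ?thesis unfolding trinomial_indices_def by blast
  qed
  with assms show ?thesis unfolding p_tri_def by auto
qed

lemma sum_p_tri_le_1:
  assumes "x \<in> triangle" "finite A" "inj_on \<phi> A"
  shows "(\<Sum>q\<in>A. p_tri m (fst (\<phi> q)) (snd (\<phi> q)) x) \<le> 1"
proof -
  have "(\<Sum>q\<in>A. p_tri m (fst (\<phi> q)) (snd (\<phi> q)) x) = (\<Sum>q\<in>\<phi> ` A. p_tri m (fst q) (snd q) x)"
    by (simp add: sum.reindex[OF assms(3)])
  also have "\<dots> = (\<Sum>q\<in>\<phi> ` A \<inter> trinomial_indices m. p_tri m (fst q) (snd q) x)"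
    using assms(2) p_tri_eq_0_outside by (intro sum.mono_neutral_right) auto
  also have "\<dots> \<le> (\<Sum>q\<in>trinomial_indices m. p_tri m (fst q) (snd q) x)"
    using p_tri_nonneg[OF assms(1)] by (intro sum_mono2) (auto simp: trinomial_indices_def)
  finally show ?thesis by (simp add: sum_p_tri_trinomial_indices)
qed

definition cell_indices :: "nat \<Rightarrow> (nat \<times> nat) set" where
  "cell_indices n = (SIGMA k:{..n}. {..n-k})"

lemma finite_cell_indices [simp]: "finite (cell_indices n)"
  unfolding cell_indices_def by auto

text \<open>Each of the three shifted families of trinomial weights in \<open>b_tri\<close> sums to at most 1.\<close>

lemma sum_b_tri_le_1:
  assumes x: "x \<in> triangle"
  shows "(\<Sum>q\<in>cell_indices n. b_tri n (fst q) (snd q) s x) \<le> 1"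
proof -
  define m where "m = n - s"
  define S where "S \<phi> = (\<Sum>q\<in>cell_indices n. p_tri m (fst (\<phi> q)) (snd (\<phi> q)) x)"
    for \<phi> :: "nat \<times> nat \<Rightarrow> int \<times> int"
  have S_le: "S \<phi> \<le> 1" if "inj_on \<phi> (cell_indices n)" for \<phi>
    unfolding S_def using sum_p_tri_le_1[OF x _ that] by simp
  have "(\<Sum>q\<in>cell_indices n. b_tri n (fst q) (snd q) s x)
      = (1 - fst x - snd x) * S (\<lambda>q. (int (fst q), int (snd q)))
        + fst x * S (\<lambda>q. (int (fst q) - int s, int (snd q)))
        + snd x * S (\<lambda>q. (int (fst q), int (snd q) - int s))"
    unfolding b_tri_def S_def m_def by (simp add: sum.distrib sum_distrib_left)
  also have "\<dots> \<le> (1 - fst x - snd x) * 1 + fst x * 1 + snd x * 1"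
    using x by (intro add_mono mult_left_mono S_le) (auto simp: inj_on_def triangle_def)
  finally show ?thesis by simp
qed

lemma b_tri_le_1:
  assumes "x \<in> triangle" "q \<in> cell_indices n"
  shows "b_tri n (fst q) (snd q) s x \<le> 1"
proof -
  have "b_tri n (fst q) (snd q) s x \<le> (\<Sum>q\<in>cell_indices n. b_tri n (fst q) (snd q) s x)"
    using assms b_tri_nonneg[OF assms(1)] by (intro member_le_sum) auto
  also have "\<dots> \<le> 1" by (rule sum_b_tri_le_1[OF assms(1)])
  finally show ?thesis .
qed

lemma integrable_b_tri_mult:
  assumes g: "integrable lebesgue_triangle g" and q: "q \<in> cell_indices n"
  shows "integrable lebesgue_triangle (\<lambda>x. b_tri n (fst q) (snd q) s x * g x)"
proof (rule Bochner_Integration.integrable_bound[OF g])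
  show "(\<lambda>x. b_tri n (fst q) (snd q) s x * g x) \<in> borel_measurable lebesgue_triangle"
    by (rule borel_measurable_times[OF borel_measurable_lebesgue_triangle[OF borel_measurable_b_tri]
          borel_measurable_integrable[OF g]])
  show "AE x in lebesgue_triangle. norm (b_tri n (fst q) (snd q) s x * g x) \<le> norm (g x)"
  proof (rule AE_I2)
    fix x assume "x \<in> space lebesgue_triangle"
    hence "\<bar>b_tri n (fst q) (snd q) s x\<bar> \<le> 1" using b_tri_le_1[OF _ q] b_tri_nonneg by simp
    thus "norm (b_tri n (fst q) (snd q) s x * g x) \<le> norm (g x)"
      by (simp add: abs_mult mult_left_le_one_le)
  qed
qed

section \<open>Dirichlet integrals over the triangle\<close>

lemma has_integral_beta_nat:
  "((\<lambda>t. t^a * (1 - t)^b) has_integral (fact a * fact b / fact (a + b + 1) :: real)) {0..1}"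
proof -
  have "Beta (real a + 1) (real b + 1) = Gamma (1 + real a) * Gamma (1 + real b) / Gamma (1 + real (a + b + 1))"
    unfolding Beta_def by (simp add: add_ac)
  hence "Beta (real a + 1) (real b + 1) = fact a * fact b / fact (a + b + 1)"
    by (simp only: Gamma_fact)
  moreover have "((\<lambda>t. t powr (real a + 1 - 1) * (1 - t) powr (real b + 1 - 1))
      has_integral Beta (real a + 1) (real b + 1)) {0..1}"
    by (rule has_integral_Beta_real) auto
  ultimately have "((\<lambda>t. t powr (real a) * (1 - t) powr (real b))
      has_integral (fact a * fact b / fact (a + b + 1))) {0..1}"
    by simp
  from has_integral_spike_finite[OF _ _ this, of "{0, 1}"] show ?thesis
    by (auto simp: powr_realpow)
qed

lemma nn_integral_beta_scaled:
  assumes L: "L \<ge> 0"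
  shows "(\<integral>\<^sup>+ y. ennreal (indicator {0..L} y * (y^a * (L - y)^b)) \<partial>lborel)
       = ennreal (L^(a+b+1) * (fact a * fact b / fact (a + b + 1)))"
proof (cases "L = 0")
  case True
  have "(\<integral>\<^sup>+ y. ennreal (indicator {0..L} y * (y^a * (L - y)^b)) \<partial>lborel)
      = (\<integral>\<^sup>+ y. ennreal ((0::real)^a * 0^b) * indicator {0::real} y \<partial>lborel)"
    using True by (intro nn_integral_cong) (auto split: split_indicator)
  also have "\<dots> = 0" by (subst nn_integral_cmult_indicator) auto
  finally show ?thesis using True by simp
next
  case False
  hence L: "L > 0" using L by simp
  have beta: "(\<integral>\<^sup>+ t. ennreal (indicator {0..1} t * (t^a * (1 - t)^b)) \<partial>lborel)
      = ennreal (fact a * fact b / fact (a + b + 1))"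
    by (rule nn_integral_has_integral_lebesgue[OF _ has_integral_beta_nat]) auto
  have scale: "ennreal (indicator {0..L} (0 + L * t) * ((0 + L * t)^a * (L - (0 + L * t))^b))
      = ennreal (L^(a+b)) * ennreal (indicator {0..1} t * (t^a * (1 - t)^b))" for t
  proof -
    have "(L * t \<in> {0..L}) = (t \<in> {0..1})" using L
      by (auto simp: zero_le_mult_iff mult_le_cancel_left1)
    moreover have "L - L * t = L * (1 - t)" by (simp add: algebra_simps)
    ultimately have "indicator {0..L} (0 + L * t) * ((0 + L * t)^a * (L - (0 + L * t))^b)
        = L^(a+b) * (indicator {0..1} t * (t^a * (1 - t)^b))"
      by (simp add: indicator_def power_mult_distrib power_add)
    thus ?thesis using L by (simp add: ennreal_mult')
  qed
  have "(\<integral>\<^sup>+ y. ennreal (indicator {0..L} y * (y^a * (L - y)^b)) \<partial>lborel)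
      = ennreal \<bar>L\<bar> * (\<integral>\<^sup>+ t. ennreal (indicator {0..L} (0 + L * t) * ((0 + L * t)^a * (L - (0 + L * t))^b)) \<partial>lborel)"
    by (rule nn_integral_real_affine) (use L in auto)
  also have "\<dots> = ennreal L * (\<integral>\<^sup>+ t. ennreal (L^(a+b)) * ennreal (indicator {0..1} t * (t^a * (1 - t)^b)) \<partial>lborel)"
    using L by (simp only: scale abs_of_pos)
  also have "\<dots> = ennreal L * (ennreal (L^(a+b)) * ennreal (fact a * fact b / fact (a + b + 1)))"
    by (simp add: nn_integral_cmult beta)
  also have "\<dots> = ennreal (L^(a+b+1) * (fact a * fact b / fact (a + b + 1)))"
    using L by (simp add: ennreal_mult[symmetric] mult_ac)
  finally show ?thesis .
qed

lemma nn_integral_triangle_slice: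
  "(\<integral>\<^sup>+ y. ennreal (indicator triangle (x, y) * (x^i * y^j * (1 - x - y)^r)) \<partial>lborel)
     = ennreal (fact j * fact r / fact (j + r + 1) * (indicator {0..1} x * (x^i * (1 - x)^(j+r+1))))"
proof (cases "x \<in> {0..1}")
  case False
  hence "\<And>y. (x, y) \<notin> triangle" by (auto simp: triangle_def)
  thus ?thesis using False by simp
next
  case True
  have "ennreal (indicator triangle (x, y) * (x^i * y^j * (1 - x - y)^r))
      = ennreal (x^i) * ennreal (indicator {0..1-x} y * (y^j * ((1 - x) - y)^r))" for y
  proof -
    have "indicator triangle (x, y) = (indicator {0..1-x} y :: real)"
      using True by (auto simp: triangle_def indicator_def)
    thus ?thesis using True by (simp add: ennreal_mult'[symmetric] mult_ac diff_diff_eq)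
  qed
  hence "(\<integral>\<^sup>+ y. ennreal (indicator triangle (x, y) * (x^i * y^j * (1 - x - y)^r)) \<partial>lborel)
      = (\<integral>\<^sup>+ y. ennreal (x^i) * ennreal (indicator {0..1-x} y * (y^j * ((1 - x) - y)^r)) \<partial>lborel)"
    by (intro nn_integral_cong) simp
  also have "\<dots> = ennreal (x^i) * (\<integral>\<^sup>+ y. ennreal (indicator {0..1-x} y * (y^j * ((1 - x) - y)^r)) \<partial>lborel)"
    by (rule nn_integral_cmult) measurable
  also have "\<dots> = ennreal (x^i) * ennreal ((1 - x)^(j+r+1) * (fact j * fact r / fact (j + r + 1)))"
    using True by (subst nn_integral_beta_scaled) auto
  also have "\<dots> = ennreal (fact j * fact r / fact (j + r + 1) * (indicator {0..1} x * (x^i * (1 - x)^(j+r+1))))"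
    using True by (simp add: ennreal_mult'[symmetric] mult_ac)
  finally show ?thesis .
qed

lemma nn_integral_triangle_monomial:
  "(\<integral>\<^sup>+ z. ennreal (indicator triangle z * (fst z^i * snd z^j * (1 - fst z - snd z)^r)) \<partial>lborel)
     = ennreal (fact i * fact j * fact r / fact (i + j + r + 2))"
proof -
  define K :: real where "K = fact j * fact r / fact (j + r + 1)"
  have K: "K \<ge> 0" by (simp add: K_def)
  have [measurable]: "(\<lambda>z::real \<times> real. fst z^i * snd z^j * (1 - fst z - snd z)^r) \<in> borel_measurable borel"
    by (intro borel_measurable_continuous_onI continuous_intros)
  have "(\<lambda>z. ennreal (indicator triangle z * (fst z^i * snd z^j * (1 - fst z - snd z)^r)))
      \<in> borel_measurable (lborel \<Otimes>\<^sub>M lborel)"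
    unfolding lborel_prod by simp
  from lborel.nn_integral_fst[OF this, symmetric]
  have "(\<integral>\<^sup>+ z. ennreal (indicator triangle z * (fst z^i * snd z^j * (1 - fst z - snd z)^r)) \<partial>lborel)
      = (\<integral>\<^sup>+ x. \<integral>\<^sup>+ y. ennreal (indicator triangle (x, y) * (x^i * y^j * (1 - x - y)^r)) \<partial>lborel \<partial>lborel)"
    by (simp add: lborel_prod)
  also have "\<dots> = (\<integral>\<^sup>+ x. ennreal K * ennreal (indicator {0..1} x * (x^i * (1 - x)^(j+r+1))) \<partial>lborel)"
    by (simp only: nn_integral_triangle_slice K_def[symmetric] ennreal_mult'[OF K])
  also have "\<dots> = ennreal K * (\<integral>\<^sup>+ x. ennreal (indicator {0..1} x * (x^i * (1 - x)^(j+r+1))) \<partial>lborel)"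
    by (rule nn_integral_cmult) measurable
  also have "\<dots> = ennreal K * ennreal (fact i * fact (j+r+1) / fact (i + (j+r+1) + 1))"
    by (subst nn_integral_has_integral_lebesgue[OF _ has_integral_beta_nat]) auto
  also have "\<dots> = ennreal (fact i * fact j * fact r / fact (i + j + r + 2))"
    by (simp add: K_def ennreal_mult'[symmetric] add_ac)
  finally show ?thesis .
qed

lemma nn_integral_p_tri_le:
  "(\<integral>\<^sup>+ x. ennreal (p_tri m i j x) \<partial>lebesgue_triangle) \<le> ennreal (1 / ((real m + 1) * (real m + 2)))"
proof (cases "0 \<le> i \<and> 0 \<le> j \<and> i + j \<le> int m")
  case False
  hence "\<And>x. p_tri m i j x = 0" by (simp only: p_tri_def if_not_P[OF False] if_False)
  thus ?thesis by simp
next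
  case True
  define a where "a = nat i"
  define b where "b = nat j"
  define r where "r = m - a - b"
  have m: "m = a + b + r" using True by (simp add: a_def b_def r_def) linarith
  define C :: real where "C = fact m / (fact a * fact b * fact r)"
  have C: "C \<ge> 0" by (simp add: C_def)
  have p: "p_tri m i j x = C * (fst x^a * snd x^b * (1 - fst x - snd x)^r)" for x
    using True unfolding p_tri_def C_def a_def b_def r_def by simp
  have [measurable]: "(\<lambda>z::real \<times> real. fst z^a * snd z^b * (1 - fst z - snd z)^r) \<in> borel_measurable borel"
    by (intro borel_measurable_continuous_onI continuous_intros)
  have "(\<integral>\<^sup>+ x. ennreal (p_tri m i j x) \<partial>lebesgue_triangle)
      = (\<integral>\<^sup>+ x. ennreal C * ennreal (indicator triangle x * (fst x^a * snd x^b * (1 - fst x - snd x)^r)) \<partial>lborel)"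
    by (subst nn_integral_lebesgue_triangle, measurable)
      (intro nn_integral_cong, auto simp: p ennreal_mult'[OF C] split: split_indicator)
  also have "\<dots> = ennreal C * ennreal (fact a * fact b * fact r / fact (a + b + r + 2))"
    by (subst nn_integral_cmult) (measurable, simp only: nn_integral_triangle_monomial)
  also have "\<dots> = ennreal (fact m / fact (m + 2))"
    using C by (simp add: ennreal_mult'[symmetric] C_def m)
  also have "fact m / fact (m + 2) = (1 / ((real m + 1) * (real m + 2)) :: real)"
  proof -
    have "(fact (m + 2) :: real) = (real m + 2) * ((real m + 1) * fact m)"
      by (simp add: numeral_2_eq_2 algebra_simps)
    thus ?thesis by (simp add: divide_simps)
  qed
  finally show ?thesis by simp
qed

lemma integrable_b_tri:
  assumes "q \<in> cell_indices n"
  shows "integrable lebesgue_triangle (b_tri n (fst q) (snd q) s)"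
proof -
  interpret finite_measure lebesgue_triangle by (rule finite_measure_lebesgue_triangle)
  have "integrable lebesgue_triangle (\<lambda>x. b_tri n (fst q) (snd q) s x * 1)"
    by (rule integrable_b_tri_mult[OF integrable_const assms])
  thus ?thesis by simp
qed

lemma integral_b_tri_le:
  assumes "(k, l) \<in> cell_indices n"
  shows "(\<integral>x. b_tri n k l s x \<partial>lebesgue_triangle) \<le> 3 / ((real (n - s) + 1) * (real (n - s) + 2))"
proof -
  define m where "m = n - s"
  define E where "E = ennreal (1 / ((real m + 1) * (real m + 2)))"
  have b_le: "ennreal (b_tri n k l s x)
      \<le> ennreal (p_tri m k l x) + ennreal (p_tri m (int k - int s) l x) + ennreal (p_tri m k (int l - int s) x)"
    if x: "x \<in> triangle" for x
  proof -
    have "b_tri n k l s x \<le> p_tri m k l x + p_tri m (int k - int s) l x + p_tri m k (int l - int s) x"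
      unfolding b_tri_def m_def[symmetric] using x p_tri_nonneg[OF x]
      by (intro add_mono) (auto intro: mult_left_le_one_le simp: triangle_def)
    thus ?thesis using p_tri_nonneg[OF x] by (simp add: ennreal_plus[symmetric] del: ennreal_plus)
  qed
  have "ennreal (\<integral>x. b_tri n k l s x \<partial>lebesgue_triangle) = (\<integral>\<^sup>+ x. ennreal (b_tri n k l s x) \<partial>lebesgue_triangle)"
    using integrable_b_tri[OF assms, of s]
    by (intro nn_integral_eq_integral[symmetric]) (auto intro!: AE_I2 b_tri_nonneg)
  also have "\<dots> \<le> (\<integral>\<^sup>+ x. ennreal (p_tri m k l x) + ennreal (p_tri m (int k - int s) l x)
      + ennreal (p_tri m k (int l - int s) x) \<partial>lebesgue_triangle)"
    by (intro nn_integral_mono) (simp add: b_le)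
  also have "\<dots> = (\<integral>\<^sup>+ x. ennreal (p_tri m k l x) \<partial>lebesgue_triangle)
      + (\<integral>\<^sup>+ x. ennreal (p_tri m (int k - int s) l x) \<partial>lebesgue_triangle)
      + (\<integral>\<^sup>+ x. ennreal (p_tri m k (int l - int s) x) \<partial>lebesgue_triangle)"
    by (simp add: nn_integral_add borel_measurable_lebesgue_triangle)
  also have "\<dots> \<le> E + E + E"
    unfolding E_def by (intro add_mono nn_integral_p_tri_le)
  also have "\<dots> = ennreal (3 / ((real m + 1) * (real m + 2)))"
    unfolding E_def by (simp add: ennreal_plus[symmetric] del: ennreal_plus)
  finally show ?thesis unfolding m_def by (simp add: ennreal_le_iff)
qed


lemma b_tri_mass_le:
  assumes "2 * s < n" "q \<in> cell_indices n"
  shows "(real (n + 2))^2 * (\<integral>x. b_tri n (fst q) (snd q) s x \<partial>lebesgue_triangle) \<le> 12"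
proof -
  obtain m where m: "m = real (n - s)" by simp
  have "real n + 1 \<le> 2 * m" using assms(1) m by linarith
  hence "(real n + 2) * (real n + 2) \<le> (2 * m + 2) * (2 * m + 4)"
    by (intro mult_mono) auto
  hence N: "(real (n + 2))^2 \<le> 4 * ((m + 1) * (m + 2))"
    by (simp add: power2_eq_square algebra_simps)
  have "(\<integral>x. b_tri n (fst q) (snd q) s x \<partial>lebesgue_triangle) \<le> 3 / ((m + 1) * (m + 2))"
    using integral_b_tri_le[of "fst q" "snd q" n s] assms(2) m by simp
  hence "(real (n + 2))^2 * (\<integral>x. b_tri n (fst q) (snd q) s x \<partial>lebesgue_triangle)
      \<le> (real (n + 2))^2 * (3 / ((m + 1) * (m + 2)))"
    by (intro mult_left_mono) auto
  also have "\<dots> = 3 * (real (n + 2))^2 / ((m + 1) * (m + 2))" by simp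
  also have "\<dots> \<le> 12"
    using N m by (simp add: pos_divide_le_eq)
  finally show ?thesis .
qed

definition open_cell :: "nat \<Rightarrow> nat \<Rightarrow> nat \<Rightarrow> (real \<times> real) set" where
  "open_cell n k l = {real k / real (n + 2) <..< real (k + 1) / real (n + 2)} \<times>
                     {real l / real (n + 2) <..< real (l + 1) / real (n + 2)}"

lemma sets_sq_cell [measurable]: "sq_cell n k l \<in> sets borel"
  unfolding sq_cell_def by (intro borel_closed closed_Times) auto

lemma sets_open_cell [measurable]: "open_cell n k l \<in> sets borel"
  unfolding open_cell_def by (intro borel_open open_Times) auto

lemma open_cell_subset_sq_cell: "open_cell n k l \<subseteq> sq_cell n k l"
  unfolding sq_cell_def open_cell_def by auto

lemma sq_cell_subset_triangle:
  assumes "q \<in> cell_indices n"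
  shows "sq_cell n (fst q) (snd q) \<subseteq> triangle"
proof
  fix u assume u: "u \<in> sq_cell n (fst q) (snd q)"
  have q: "fst q + snd q \<le> n" using assms by (auto simp: cell_indices_def)
  have u1: "fst u \<ge> real (fst q) / real (n + 2)" "fst u \<le> real (fst q + 1) / real (n + 2)"
   and u2: "snd u \<ge> real (snd q) / real (n + 2)" "snd u \<le> real (snd q + 1) / real (n + 2)"
    using u unfolding sq_cell_def by (auto simp: mem_Times_iff)
  have "fst u + snd u \<le> (real (fst q + 1) + real (snd q + 1)) / real (n + 2)"
    using u1(2) u2(2) by (simp add: add_divide_distrib)
  also have "\<dots> \<le> real (n + 2) / real (n + 2)" using q by (intro divide_right_mono) auto
  finally show "u \<in> triangle" using u1(1) u2(1) unfolding triangle_def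
    by (auto intro: order.trans[rotated])
qed

lemma open_cell_subset_triangle: "q \<in> cell_indices n \<Longrightarrow> open_cell n (fst q) (snd q) \<subseteq> triangle"
  using open_cell_subset_sq_cell sq_cell_subset_triangle by blast

lemma sets_open_cell_lebesgue_triangle:
  "q \<in> cell_indices n \<Longrightarrow> open_cell n (fst q) (snd q) \<in> sets lebesgue_triangle"
  using open_cell_subset_triangle by (simp add: sets_restrict_space_iff)

lemma emeasure_open_cell: "emeasure lborel (open_cell n k l) = ennreal (1 / (real (n + 2))^2)"
proof -
  have le: "real j / real (n + 2) \<le> real (j + 1) / real (n + 2)" for j
    by (intro divide_right_mono) auto
  have diff: "real (j + 1) / real (n + 2) - real j / real (n + 2) = 1 / real (n + 2)" for j
    by (simp add: diff_divide_distrib[symmetric])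
  have "emeasure lborel (open_cell n k l)
      = emeasure lborel {real k / real (n + 2) <..< real (k + 1) / real (n + 2)}
        * emeasure lborel {real l / real (n + 2) <..< real (l + 1) / real (n + 2)}"
    unfolding open_cell_def lborel_prod[symmetric] by (rule lborel.emeasure_pair_measure_Times) auto
  also have "\<dots> = ennreal (1 / (real (n + 2))^2)"
    by (simp only: emeasure_lborel_Ioo[OF le] diff) (simp add: ennreal_mult'[symmetric] power2_eq_square)
  finally show ?thesis .
qed

lemma sq_cell_diff_open_cell_null: "sq_cell n k l - open_cell n k l \<in> null_sets lebesgue"
proof -
  have "sq_cell n k l - open_cell n k l
      \<subseteq> ({real k / real (n + 2), real (k + 1) / real (n + 2)} \<times> UNIV) \<union>
         (UNIV \<times> {real l / real (n + 2), real (l + 1) / real (n + 2)})"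
    unfolding sq_cell_def open_cell_def by (auto simp: mem_Times_iff)
  moreover have "{a, b :: real} \<times> (UNIV :: real set) \<in> null_sets lborel" for a b
    unfolding lborel_prod[symmetric] by (intro lborel.times_in_null_sets1 finite_imp_null_set_lborel) auto
  moreover have "(UNIV :: real set) \<times> {a, b :: real} \<in> null_sets lborel" for a b
    unfolding lborel_prod[symmetric] by (intro lborel.times_in_null_sets2 finite_imp_null_set_lborel) auto
  moreover have "sq_cell n k l - open_cell n k l \<in> sets lborel" by simp
  ultimately have "sq_cell n k l - open_cell n k l \<in> null_sets lborel"
    by (meson null_sets.Un null_sets_subset)
  thus ?thesis by (rule null_sets_completionI)
qed

lemma disjoint_open_cells:
  assumes "(k, l) \<noteq> (k', l')"
  shows "open_cell n k l \<inter> open_cell n k' l' = {}"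
proof -
  have floor_eq: "\<lfloor>real (n + 2) * t\<rfloor> = int j"
    if "t \<in> {real j / real (n + 2) <..< real (j + 1) / real (n + 2)}" for t j
  proof -
    have "real j < real (n + 2) * t" "real (n + 2) * t < real j + 1"
      using that by (simp_all add: divide_less_eq less_divide_eq mult.commute)
    thus ?thesis by linarith
  qed
  show ?thesis
    using assms floor_eq unfolding open_cell_def by (auto simp: mem_Times_iff) (metis of_nat_eq_iff)+
qed

definition cell_integral :: "nat \<Rightarrow> nat \<times> nat \<Rightarrow> ((real \<times> real) \<Rightarrow> real) \<Rightarrow> real" where
  "cell_integral n q f = (LINT u : sq_cell n (fst q) (snd q) | lebesgue. f u)"

lemma stancu_kantorovich_eq_sum:
  "stancu_kantorovich n s f x
     = (\<Sum>q\<in>cell_indices n. b_tri n (fst q) (snd q) s x * (real (n + 2))^2 * cell_integral n q f)"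
  unfolding stancu_kantorovich_def cell_indices_def cell_integral_def
  by (subst sum.Sigma) (auto simp: case_prod_unfold)

lemma borel_measurable_stancu_kantorovich [measurable]:
  "stancu_kantorovich n s f \<in> borel_measurable borel"
  unfolding stancu_kantorovich_def by measurable

lemma set_integrable_sq_cell:
  fixes f :: "real \<times> real \<Rightarrow> 'a::{banach, second_countable_topology}"
  assumes f: "integrable lebesgue_triangle f" and q: "q \<in> cell_indices n"
  shows "set_integrable lebesgue (sq_cell n (fst q) (snd q)) f"
proof -
  have "set_integrable lebesgue triangle f"
    using f set_integrable_eq[of triangle lebesgue f] by simp
  thus ?thesis by (rule set_integrable_subset) (simp_all add: sq_cell_subset_triangle[OF q])
qed

lemma cell_integral_eq_open_cell:
  assumes f: "integrable lebesgue_triangle f" and q: "q \<in> cell_indices n"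
  shows "(\<integral>x. f x * indicator (open_cell n (fst q) (snd q)) x \<partial>lebesgue_triangle) = cell_integral n q f"
proof -
  let ?D = "open_cell n (fst q) (snd q)" and ?C = "sq_cell n (fst q) (snd q)"
  have C: "set_integrable lebesgue ?C f" by (rule set_integrable_sq_cell[OF f q])
  have "(\<integral>x. f x * indicator ?D x \<partial>lebesgue_triangle)
      = (\<integral>x. indicator triangle x *\<^sub>R (f x * indicator ?D x) \<partial>lebesgue)"
    by (subst integral_restrict_space) auto
  also have "\<dots> = (LINT x : ?D | lebesgue. f x)"
    unfolding set_lebesgue_integral_def using open_cell_subset_triangle[OF q]
    by (intro Bochner_Integration.integral_cong) (auto split: split_indicator)
  also have "\<dots> = (LINT x : ?C | lebesgue. f x)"
  proof (rule set_integral_cong_set)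
    show "set_borel_measurable lebesgue ?C f"
      using C unfolding set_integrable_def set_borel_measurable_def by (rule borel_measurable_integrable)
    have "set_integrable lebesgue ?D f"
      by (rule set_integrable_subset[OF C _ open_cell_subset_sq_cell]) simp
    thus "set_borel_measurable lebesgue ?D f"
      unfolding set_integrable_def set_borel_measurable_def by (rule borel_measurable_integrable)
    show "AE x in lebesgue. (x \<in> ?C) = (x \<in> ?D)"
      using AE_not_in[OF sq_cell_diff_open_cell_null[of n "fst q" "snd q"]]
        open_cell_subset_sq_cell[of n "fst q" "snd q"]
      by (auto elim!: eventually_mono)
  qed
  finally show ?thesis unfolding cell_integral_def .
qed

lemma stancu_kantorovich_linear:
  assumes f: "integrable lebesgue_triangle f" and g: "integrable lebesgue_triangle g"
  shows "stancu_kantorovich n s (\<lambda>u. a * f u + b * g u) x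
       = a * stancu_kantorovich n s f x + b * stancu_kantorovich n s g x"
proof -
  have "cell_integral n q (\<lambda>u. a * f u + b * g u) = a * cell_integral n q f + b * cell_integral n q g"
    if q: "q \<in> cell_indices n" for q
    using set_integrable_mult_right[OF set_integrable_sq_cell[OF f q], of a]
      set_integrable_mult_right[OF set_integrable_sq_cell[OF g q], of b]
    unfolding cell_integral_def by (simp add: set_integral_add)
  thus ?thesis
    unfolding stancu_kantorovich_eq_sum
    by (simp add: sum_distrib_left sum.distrib algebra_simps cong: sum.cong)
qed

lemma stancu_kantorovich_mult_eq_sum:
  "stancu_kantorovich n s f x * g x
     = (\<Sum>q\<in>cell_indices n. (real (n + 2))^2 * cell_integral n q f * (b_tri n (fst q) (snd q) s x * g x))"
  unfolding stancu_kantorovich_eq_sum by (simp add: sum_distrib_right sum_distrib_left mult_ac)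

lemma integrable_stancu_kantorovich_mult:
  "integrable lebesgue_triangle g \<Longrightarrow> integrable lebesgue_triangle (\<lambda>x. stancu_kantorovich n s f x * g x)"
  unfolding stancu_kantorovich_mult_eq_sum
  by (intro Bochner_Integration.integrable_sum integrable_mult_right integrable_b_tri_mult)

lemma stancu_kantorovich_in_orlicz_space:
  assumes \<Phi>: "N_function \<Phi>"
  shows "stancu_kantorovich n s f \<in> orlicz_space \<Phi>"
  unfolding orlicz_space_def
proof (intro CollectI conjI ballI impI)
  show "stancu_kantorovich n s f \<in> borel_measurable lebesgue_triangle"
    by (rule borel_measurable_lebesgue_triangle) simp
  fix g assume "g \<in> borel_measurable lebesgue_triangle"
    and "(\<integral>\<^sup>+ x. ennreal (compl_N \<Phi> (g x)) \<partial>lebesgue_triangle) < \<infinity>"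
  hence "integrable lebesgue_triangle g"
    by (intro finite_measure.integrable_if_nn_integral_compl_N_finite[OF finite_measure_lebesgue_triangle \<Phi>])
  thus "integrable lebesgue_triangle (\<lambda>x. stancu_kantorovich n s f x * g x)"
    by (rule integrable_stancu_kantorovich_mult)
qed

section \<open>The dual step function\<close>

definition cell_step :: "nat \<Rightarrow> (nat \<times> nat \<Rightarrow> real) \<Rightarrow> real \<times> real \<Rightarrow> real" where
  "cell_step n c u = (\<Sum>q\<in>cell_indices n. indicator (open_cell n (fst q) (snd q)) u * c q)"

lemma borel_measurable_cell_step [measurable]: "cell_step n c \<in> borel_measurable borel"
  unfolding cell_step_def by measurable

lemma integral_mult_cell_step:
  assumes f: "integrable lebesgue_triangle f"
  shows "(\<integral>x. f x * cell_step n c x \<partial>lebesgue_triangle) = (\<Sum>q\<in>cell_indices n. c q * cell_integral n q f)"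
proof -
  have "(\<lambda>x. f x * cell_step n c x)
      = (\<lambda>x. \<Sum>q\<in>cell_indices n. c q * (f x * indicator (open_cell n (fst q) (snd q)) x))"
    unfolding cell_step_def by (simp add: sum_distrib_left mult_ac del: sum_mult_indicator)
  moreover have "integrable lebesgue_triangle (\<lambda>x. f x * indicator (open_cell n (fst q) (snd q)) x)"
    if "q \<in> cell_indices n" for q
    by (rule integrable_real_mult_indicator[OF sets_open_cell_lebesgue_triangle[OF that] f])
  ultimately show ?thesis
    by (simp add: integral_sum cell_integral_eq_open_cell[OF f] cong: sum.cong)
qed

text \<open>The open cells are pairwise disjoint, so \<open>compl_N \<Phi>\<close> commutes with the step function.\<close>

lemma compl_N_cell_step:
  assumes \<Phi>: "N_function \<Phi>"
  shows "ennreal (compl_N \<Phi> (cell_step n c u))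
       = (\<Sum>q\<in>cell_indices n. ennreal (compl_N \<Phi> (c q)) * indicator (open_cell n (fst q) (snd q)) u)"
proof (cases "\<exists>q\<in>cell_indices n. u \<in> open_cell n (fst q) (snd q)")
  case True
  then obtain q where q: "q \<in> cell_indices n" "u \<in> open_cell n (fst q) (snd q)" by auto
  have "u \<notin> open_cell n (fst q') (snd q')" if "q' \<noteq> q" for q'
    using disjoint_open_cells[of "fst q'" "snd q'" "fst q" "snd q" n] that q(2) by auto
  hence "cell_step n c u = c q"
    "(\<Sum>q\<in>cell_indices n. ennreal (compl_N \<Phi> (c q)) * indicator (open_cell n (fst q) (snd q)) u)
      = ennreal (compl_N \<Phi> (c q))"
    unfolding cell_step_def using q by (subst sum.remove[OF finite_cell_indices q(1)]; simp)+
  thus ?thesis by simp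
next
  case False
  thus ?thesis by (simp add: cell_step_def compl_N_zero[OF \<Phi>])
qed

lemma nn_integral_compl_N_cell_step:
  assumes \<Phi>: "N_function \<Phi>"
  shows "(\<integral>\<^sup>+ x. ennreal (compl_N \<Phi> (cell_step n c x)) \<partial>lebesgue_triangle)
       = ennreal (\<Sum>q\<in>cell_indices n. compl_N \<Phi> (c q) / (real (n + 2))^2)"
proof -
  have cell: "emeasure lebesgue_triangle (open_cell n (fst q) (snd q)) = ennreal (1 / (real (n + 2))^2)"
    if "q \<in> cell_indices n" for q
    using open_cell_subset_triangle[OF that]
    by (simp add: emeasure_restrict_space Int_absorb2 emeasure_open_cell)
  have "(\<integral>\<^sup>+ x. ennreal (compl_N \<Phi> (cell_step n c x)) \<partial>lebesgue_triangle)
      = (\<Sum>q\<in>cell_indices n. ennreal (compl_N \<Phi> (c q)) * emeasure lebesgue_triangle (open_cell n (fst q) (snd q)))"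
    unfolding compl_N_cell_step[OF \<Phi>] using sets_open_cell_lebesgue_triangle
    by (subst nn_integral_sum) (auto simp: nn_integral_cmult_indicator)
  also have "\<dots> = (\<Sum>q\<in>cell_indices n. ennreal (compl_N \<Phi> (c q) / (real (n + 2))^2))"
    by (intro sum.cong refl) (simp add: cell ennreal_mult'[OF compl_N_nonneg[OF \<Phi>], symmetric])
  also have "\<dots> = ennreal (\<Sum>q\<in>cell_indices n. compl_N \<Phi> (c q) / (real (n + 2))^2)"
    using compl_N_nonneg[OF \<Phi>] by (intro sum_ennreal) simp
  finally show ?thesis .
qed

text \<open>The coefficients of the adjoint operator, scaled by \<open>1/12\<close>.\<close>

definition stancu_dual_coeff :: "nat \<Rightarrow> nat \<Rightarrow> ((real \<times> real) \<Rightarrow> real) \<Rightarrow> nat \<times> nat \<Rightarrow> real" where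
  "stancu_dual_coeff n s g q
     = (real (n + 2))^2 / 12 * (\<integral>x. b_tri n (fst q) (snd q) s x * g x \<partial>lebesgue_triangle)"

lemma integral_stancu_kantorovich_mult:
  assumes f: "integrable lebesgue_triangle f" and g: "integrable lebesgue_triangle g"
  shows "(\<integral>x. stancu_kantorovich n s f x * g x \<partial>lebesgue_triangle)
       = 12 * (\<integral>x. f x * cell_step n (stancu_dual_coeff n s g) x \<partial>lebesgue_triangle)"
proof -
  have "(\<integral>x. stancu_kantorovich n s f x * g x \<partial>lebesgue_triangle)
      = (\<Sum>q\<in>cell_indices n. (real (n + 2))^2 * cell_integral n q f
          * (\<integral>x. b_tri n (fst q) (snd q) s x * g x \<partial>lebesgue_triangle))"
    unfolding stancu_kantorovich_mult_eq_sum
    by (simp add: integral_sum integrable_b_tri_mult[OF g])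
  also have "\<dots> = 12 * (\<Sum>q\<in>cell_indices n. stancu_dual_coeff n s g q * cell_integral n q f)"
    unfolding stancu_dual_coeff_def by (simp add: sum_distrib_left mult_ac)
  also have "\<dots> = 12 * (\<integral>x. f x * cell_step n (stancu_dual_coeff n s g) x \<partial>lebesgue_triangle)"
    by (simp add: integral_mult_cell_step[OF f])
  finally show ?thesis .
qed

lemma compl_N_stancu_dual_coeff_le:
  assumes \<Phi>: "N_function \<Phi>" and ns: "2 * s < n" and q: "q \<in> cell_indices n"
    and g: "integrable lebesgue_triangle g"
    and \<Psi>g: "integrable lebesgue_triangle (\<lambda>x. compl_N \<Phi> (g x))"
  shows "compl_N \<Phi> (stancu_dual_coeff n s g q)
       \<le> (real (n + 2))^2 / 12 * (\<integral>x. b_tri n (fst q) (snd q) s x * compl_N \<Phi> (g x) \<partial>lebesgue_triangle)"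
proof -
  define w where "w x = (real (n + 2))^2 / 12 * b_tri n (fst q) (snd q) s x" for x
  have "stancu_dual_coeff n s g q = (\<integral>x. w x * g x \<partial>lebesgue_triangle)"
    unfolding stancu_dual_coeff_def w_def by (simp add: mult.assoc)
  also have "compl_N \<Phi> \<dots> \<le> (\<integral>x. w x * compl_N \<Phi> (g x) \<partial>lebesgue_triangle)"
  proof (rule compl_N_integral_le[OF \<Phi>])
    show "integrable lebesgue_triangle w"
      unfolding w_def using integrable_b_tri[OF q] by simp
    show "integrable lebesgue_triangle (\<lambda>x. w x * g x)"
      unfolding w_def using integrable_b_tri_mult[OF g q] by (simp add: mult.assoc)
    show "integrable lebesgue_triangle (\<lambda>x. w x * compl_N \<Phi> (g x))"
      unfolding w_def using integrable_b_tri_mult[OF \<Psi>g q] by (simp add: mult.assoc)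
    show "\<And>x. x \<in> space lebesgue_triangle \<Longrightarrow> 0 \<le> w x"
      unfolding w_def by (simp add: b_tri_nonneg)
    show "(\<integral>x. w x \<partial>lebesgue_triangle) \<le> 1"
      using b_tri_mass_le[OF ns q] unfolding w_def by simp
  qed
  also have "\<dots> = (real (n + 2))^2 / 12
      * (\<integral>x. b_tri n (fst q) (snd q) s x * compl_N \<Phi> (g x) \<partial>lebesgue_triangle)"
    unfolding w_def by (simp add: mult.assoc)
  finally show ?thesis .
qed

lemma sum_compl_N_stancu_dual_coeff_le:
  assumes \<Phi>: "N_function \<Phi>" and ns: "2 * s < n" and g: "integrable lebesgue_triangle g"
    and \<Psi>g: "integrable lebesgue_triangle (\<lambda>x. compl_N \<Phi> (g x))"
  shows "(\<Sum>q\<in>cell_indices n. compl_N \<Phi> (stancu_dual_coeff n s g q) / (real (n + 2))^2)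
       \<le> (\<integral>x. compl_N \<Phi> (g x) \<partial>lebesgue_triangle)"
proof -
  have \<Psi>g_nonneg: "compl_N \<Phi> (g x) \<ge> 0" for x by (rule compl_N_nonneg[OF \<Phi>])
  have "(\<Sum>q\<in>cell_indices n. compl_N \<Phi> (stancu_dual_coeff n s g q) / (real (n + 2))^2)
      \<le> (\<Sum>q\<in>cell_indices n. 1 / 12
          * (\<integral>x. b_tri n (fst q) (snd q) s x * compl_N \<Phi> (g x) \<partial>lebesgue_triangle))"
    using compl_N_stancu_dual_coeff_le[OF \<Phi> ns _ g \<Psi>g] by (intro sum_mono) (simp add: field_simps)
  also have "\<dots> = 1 / 12 * (\<integral>x. (\<Sum>q\<in>cell_indices n. b_tri n (fst q) (snd q) s x)
      * compl_N \<Phi> (g x) \<partial>lebesgue_triangle)"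
    by (simp add: sum_distrib_left sum_distrib_right integral_sum integrable_b_tri_mult[OF \<Psi>g])
  also have "\<dots> \<le> 1 / 12 * (\<integral>x. compl_N \<Phi> (g x) \<partial>lebesgue_triangle)"
  proof (intro mult_left_mono integral_mono[OF _ \<Psi>g])
    show "integrable lebesgue_triangle
        (\<lambda>x. (\<Sum>q\<in>cell_indices n. b_tri n (fst q) (snd q) s x) * compl_N \<Phi> (g x))"
      by (simp add: sum_distrib_right integrable_b_tri_mult[OF \<Psi>g])
    show "(\<Sum>q\<in>cell_indices n. b_tri n (fst q) (snd q) s x) * compl_N \<Phi> (g x) \<le> compl_N \<Phi> (g x)"
      if "x \<in> space lebesgue_triangle" for x
      using that mult_right_mono[OF sum_b_tri_le_1 \<Psi>g_nonneg, of x n s] by simp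
  qed simp
  also have "\<dots> \<le> (\<integral>x. compl_N \<Phi> (g x) \<partial>lebesgue_triangle)"
    using \<Psi>g_nonneg by simp
  finally show ?thesis .
qed

lemma nn_integral_compl_N_cell_step_le:
  assumes \<Phi>: "N_function \<Phi>" and ns: "2 * s < n" and g: "g \<in> borel_measurable lebesgue_triangle"
  shows "(\<integral>\<^sup>+ x. ennreal (compl_N \<Phi> (cell_step n (stancu_dual_coeff n s g) x)) \<partial>lebesgue_triangle)
       \<le> (\<integral>\<^sup>+ x. ennreal (compl_N \<Phi> (g x)) \<partial>lebesgue_triangle)"
proof (cases "(\<integral>\<^sup>+ x. ennreal (compl_N \<Phi> (g x)) \<partial>lebesgue_triangle) = \<infinity>")
  case False
  have gi: "integrable lebesgue_triangle g"
    using False by (intro finite_measure.integrable_if_nn_integral_compl_N_finite[OF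
        finite_measure_lebesgue_triangle \<Phi> g]) (simp add: less_top)
  have \<Psi>gi: "integrable lebesgue_triangle (\<lambda>x. compl_N \<Phi> (g x))"
    using False g borel_measurable_compl_N[OF \<Phi>] compl_N_nonneg[OF \<Phi>]
    by (intro integrableI_bounded) (simp_all add: less_top)
  have "(\<integral>\<^sup>+ x. ennreal (compl_N \<Phi> (cell_step n (stancu_dual_coeff n s g) x)) \<partial>lebesgue_triangle)
      \<le> ennreal (\<integral>x. compl_N \<Phi> (g x) \<partial>lebesgue_triangle)"
    unfolding nn_integral_compl_N_cell_step[OF \<Phi>]
    by (intro ennreal_leI sum_compl_N_stancu_dual_coeff_le[OF \<Phi> ns gi \<Psi>gi])
  also have "\<dots> = (\<integral>\<^sup>+ x. ennreal (compl_N \<Phi> (g x)) \<partial>lebesgue_triangle)"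
    using \<Psi>gi compl_N_nonneg[OF \<Phi>] by (subst nn_integral_eq_integral) auto
  finally show ?thesis .
qed simp

lemma orlicz_norm_stancu_kantorovich_le:
  assumes \<Phi>: "N_function \<Phi>" and ns: "2 * s < n" and f: "integrable lebesgue_triangle f"
  shows "orlicz_norm \<Phi> (stancu_kantorovich n s f) \<le> 12 * orlicz_norm \<Phi> f"
  unfolding orlicz_norm_def[of \<Phi> "stancu_kantorovich n s f"]
proof (rule SUP_least, safe)
  fix g assume g: "g \<in> borel_measurable lebesgue_triangle"
    and \<Psi>g: "(\<integral>\<^sup>+ x. ennreal (compl_N \<Phi> (g x)) \<partial>lebesgue_triangle) \<le> 1"
  let ?h = "cell_step n (stancu_dual_coeff n s g)"
  have "(\<integral>\<^sup>+ x. ennreal (compl_N \<Phi> (g x)) \<partial>lebesgue_triangle) < \<infinity>"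
    using \<Psi>g by (rule le_less_trans) simp
  hence gi: "integrable lebesgue_triangle g"
    by (rule finite_measure.integrable_if_nn_integral_compl_N_finite[OF
        finite_measure_lebesgue_triangle \<Phi> g])
  have "(\<integral>\<^sup>+ x. ennreal (compl_N \<Phi> (?h x)) \<partial>lebesgue_triangle) \<le> 1"
    using nn_integral_compl_N_cell_step_le[OF \<Phi> ns g] \<Psi>g by (rule order.trans)
  hence "ereal \<bar>\<integral>x. f x * ?h x \<partial>lebesgue_triangle\<bar> \<le> orlicz_norm \<Phi> f"
    unfolding orlicz_norm_def
    by (intro SUP_upper) (simp add: borel_measurable_lebesgue_triangle)
  hence "12 * ereal \<bar>\<integral>x. f x * ?h x \<partial>lebesgue_triangle\<bar> \<le> 12 * orlicz_norm \<Phi> f"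
    by (intro ereal_mult_left_mono) auto
  thus "ereal \<bar>\<integral>x. stancu_kantorovich n s f x * g x \<partial>lebesgue_triangle\<bar> \<le> 12 * orlicz_norm \<Phi> f"
    by (simp add: integral_stancu_kantorovich_mult[OF f gi] abs_mult)
qed

theorem lemma2:
  fixes \<Phi> :: "real \<Rightarrow> real" and n s :: nat
  assumes "N_function \<Phi>" and "n > 0" and "2 * s < n"
  shows "(\<forall>f \<in> orlicz_space \<Phi>. \<forall>g \<in> orlicz_space \<Phi>. \<forall>a b :: real. \<forall>x \<in> triangle.
            stancu_kantorovich n s (\<lambda>u. a * f u + b * g u) x
            = a * stancu_kantorovich n s f x + b * stancu_kantorovich n s g x)
       \<and> (\<forall>f \<in> orlicz_space \<Phi>.
            stancu_kantorovich n s f \<in> orlicz_space \<Phi> \<and>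
            orlicz_norm \<Phi> (stancu_kantorovich n s f) \<le> 12 * orlicz_norm \<Phi> f)"
proof (intro conjI ballI allI)
  fix f g a b x assume "f \<in> orlicz_space \<Phi>" "g \<in> orlicz_space \<Phi>"
  thus "stancu_kantorovich n s (\<lambda>u. a * f u + b * g u) x
      = a * stancu_kantorovich n s f x + b * stancu_kantorovich n s g x"
    by (intro stancu_kantorovich_linear orlicz_space_integrable[OF assms(1)])
next
  fix f assume "f \<in> orlicz_space \<Phi>"
  thus "orlicz_norm \<Phi> (stancu_kantorovich n s f) \<le> 12 * orlicz_norm \<Phi> f"
    by (intro orlicz_norm_stancu_kantorovich_le[OF assms(1,3)] orlicz_space_integrable[OF assms(1)])
qed (rule stancu_kantorovich_in_orlicz_space[OF assms(1)])

end
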